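(* Let $(X_B,X_C,X_R)$ be an OCC (not necessarily tight) in a graph $G$ and let $(A_B,A_C,A_R)$ be a tight OCC in $G$. Let $f_X\colon X_B \to \{0,1\}$ and $f_A \colon A_B \to \{0,1\}$ be proper $2$-colorings of $G[X_B]$ and $G[A_B]$ respectively. Define the following subsets of $X_B$: $A := \{ b \in X_B : b$ has a neighbor $c \in X_C \cap A_B$ with $f_X(b) = f_A(c)\}$, $R := \{ b \in X_B : b$ has a neighbor $c \in X_C \cap A_B$ with $f_X(b) \neq f_A(c)\}$, $N := N_G(X_C \cap A_R) \cap X_B$. Then $A_C \cap X_B$ is both a minimum-size $\{A,R\}$-separator and a minimum-size $\{A,R,N\}$-separator in $G[X_B]$.
   Context: An OCT of $G$ is a set $S \subseteq V(G)$ with $G - S$ bipartite; $\mathrm{oct}(G)$ is its minimum size. An odd cycle cut (OCC) of $G$ is a partition $(X_B, X_C, X_R)$ of $V(G)$ such that $G[X_B]$ is bipartite, there is no edge between $X_B$ and $X_R$, and $X_B \cup X_C \neq \emptyset$. It is tight if $|X_C| = \mathrm{oct}(G[X_B \cup X_C])$. A vertex set $X$ separates two (not necessarily disjoint) vertex sets $S,T$ in a graph if no connected component of the graph minus $X$ contains both a vertex of $S$ and a vertex of $T$; $X$ may intersect $S \cup T$. For sets $T_1,\dots,T_m$, a $\{T_1,\dots,T_m\}$-separator is a vertex set separating $T_i$ and $T_j$ for all $i \neq j$. The sets $A,R,N$ may overlap. *)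

theory Defs
  imports Main
begin

definition graph :: "'a set \<Rightarrow> ('a \<Rightarrow> 'a \<Rightarrow> bool) \<Rightarrow> bool" where
  "graph V E \<longleftrightarrow> finite V \<and> (\<forall>u v. E u v \<longrightarrow> E v u) \<and> (\<forall>u. \<not> E u u)
     \<and> (\<forall>u v. E u v \<longrightarrow> u \<in> V \<and> v \<in> V)"

text \<open>Proper 2-colouring of the induced subgraph G[S] (colours 0/1 encoded as bool).\<close>
definition proper_2col :: "('a \<Rightarrow> 'a \<Rightarrow> bool) \<Rightarrow> 'a set \<Rightarrow> ('a \<Rightarrow> bool) \<Rightarrow> bool" where
  "proper_2col E S f \<longleftrightarrow> (\<forall>u\<in>S. \<forall>v\<in>S. E u v \<longrightarrow> f u \<noteq> f v)"

definition bipartite_on :: "('a \<Rightarrow> 'a \<Rightarrow> bool) \<Rightarrow> 'a set \<Rightarrow> bool" where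
  "bipartite_on E S \<longleftrightarrow> (\<exists>f. proper_2col E S f)"

definition oct :: "('a \<Rightarrow> 'a \<Rightarrow> bool) \<Rightarrow> 'a set \<Rightarrow> nat" where
  "oct E S = Min {card X | X. X \<subseteq> S \<and> bipartite_on E (S - X)}"

definition OCC :: "'a set \<Rightarrow> ('a \<Rightarrow> 'a \<Rightarrow> bool) \<Rightarrow> 'a set \<Rightarrow> 'a set \<Rightarrow> 'a set \<Rightarrow> bool" where
  "OCC V E XB XC XR \<longleftrightarrow> XB \<union> XC \<union> XR = V \<and> XB \<inter> XC = {} \<and> XB \<inter> XR = {}
     \<and> XC \<inter> XR = {} \<and> bipartite_on E XB
     \<and> (\<forall>u\<in>XB. \<forall>v\<in>XR. \<not> E u v) \<and> XB \<union> XC \<noteq> {}"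

definition tight_OCC :: "'a set \<Rightarrow> ('a \<Rightarrow> 'a \<Rightarrow> bool) \<Rightarrow> 'a set \<Rightarrow> 'a set \<Rightarrow> 'a set \<Rightarrow> bool" where
  "tight_OCC V E XB XC XR \<longleftrightarrow> OCC V E XB XC XR \<and> card XC = oct E (XB \<union> XC)"

definition nbhd :: "('a \<Rightarrow> 'a \<Rightarrow> bool) \<Rightarrow> 'a set \<Rightarrow> 'a set" where
  "nbhd E S = {v. \<exists>u\<in>S. E u v}"

definition conn_in :: "('a \<Rightarrow> 'a \<Rightarrow> bool) \<Rightarrow> 'a set \<Rightarrow> 'a \<Rightarrow> 'a \<Rightarrow> bool" where
  "conn_in E W s t \<longleftrightarrow> s \<in> W \<and> t \<in> W \<and> (\<lambda>u v. E u v \<and> u \<in> W \<and> v \<in> W)\<^sup>*\<^sup>* s t"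

definition separates :: "('a \<Rightarrow> 'a \<Rightarrow> bool) \<Rightarrow> 'a set \<Rightarrow> 'a set \<Rightarrow> 'a set \<Rightarrow> 'a set \<Rightarrow> bool" where
  "separates E W X S T \<longleftrightarrow> (\<forall>s\<in>S. \<forall>t\<in>T. \<not> conn_in E (W - X) s t)"

text \<open>X is a {T_1,...,T_m}-separator in G[W] (X a vertex set of G[W]); the family is
given as a list, so distinct indices are required to be separated even if sets coincide.\<close>
definition family_sep :: "('a \<Rightarrow> 'a \<Rightarrow> bool) \<Rightarrow> 'a set \<Rightarrow> 'a set list \<Rightarrow> 'a set \<Rightarrow> bool" where
  "family_sep E W Ts X \<longleftrightarrow> X \<subseteq> W \<and>
     (\<forall>i<length Ts. \<forall>j<length Ts. i \<noteq> j \<longrightarrow> separates E W X (Ts ! i) (Ts ! j))"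

definition min_family_sep :: "('a \<Rightarrow> 'a \<Rightarrow> bool) \<Rightarrow> 'a set \<Rightarrow> 'a set list \<Rightarrow> 'a set \<Rightarrow> bool" where
  "min_family_sep E W Ts X \<longleftrightarrow> family_sep E W Ts X \<and>
     (\<forall>Y. family_sep E W Ts Y \<longrightarrow> card X \<le> card Y)"

end

theory Submission
  imports Defs
begin

text \<open>Let \<open>W = X\<^sub>B - A\<^sub>C\<close>. Every component of \<open>G[W]\<close> lies in \<open>A\<^sub>B\<close> or in \<open>A\<^sub>R\<close>, and on a
  component inside \<open>A\<^sub>B\<close> the relative parity \<open>f\<^sub>X + f\<^sub>A\<close> is constant, because both colourings
  change along every edge. Vertices of A and R lie in \<open>A\<^sub>B\<close> with opposite relative parity and
  vertices of N lie in \<open>A\<^sub>R\<close>, so \<open>A\<^sub>C \<inter> X\<^sub>B\<close> separates A, R and N.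
  Conversely, let Y separate A and R in \<open>G[X\<^sub>B]\<close>. Flip \<open>f\<^sub>X\<close> on the components of \<open>G[X\<^sub>B] - Y\<close>
  not meeting R and keep \<open>f\<^sub>A\<close> outside \<open>X\<^sub>B\<close>: an edge from \<open>b \<in> X\<^sub>B\<close> to \<open>c \<in> X\<^sub>C \<inter> A\<^sub>B\<close>
  puts b in A or in R according to \<open>f\<^sub>X b\<close> vs. \<open>f\<^sub>A c\<close>, which is exactly what makes the glued
  colouring proper. Hence \<open>(A\<^sub>C - X\<^sub>B) \<union> Y\<close> is an odd cycle transversal of \<open>G[A\<^sub>B \<union> A\<^sub>C]\<close>,
  and tightness gives \<open>|A\<^sub>C \<inter> X\<^sub>B| \<le> |Y|\<close>.\<close>

lemma conn_in_edge:
  "E u v \<Longrightarrow> u \<in> W \<Longrightarrow> v \<in> W \<Longrightarrow> conn_in E W u v"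
  unfolding conn_in_def by blast

lemma conn_in_trans:
  "conn_in E W u v \<Longrightarrow> conn_in E W v w \<Longrightarrow> conn_in E W u w"
  unfolding conn_in_def by (meson rtranclp_trans)

lemma separates_by_invariant:
  assumes step: "\<And>u v. E u v \<Longrightarrow> u \<in> W - X \<Longrightarrow> v \<in> W - X \<Longrightarrow> P u \<Longrightarrow> P v"
    and S: "\<And>s. s \<in> S \<Longrightarrow> s \<in> W - X \<Longrightarrow> P s"
    and T: "\<And>t. t \<in> T \<Longrightarrow> t \<in> W - X \<Longrightarrow> \<not> P t"
  shows "separates E W X S T"
  unfolding separates_def
proof (intro ballI notI)
  fix s t assume "s \<in> S" "t \<in> T" and conn: "conn_in E (W - X) s t"
  have "P s" using S \<open>s \<in> S\<close> conn unfolding conn_in_def by blast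
  have "(\<lambda>u v. E u v \<and> u \<in> W - X \<and> v \<in> W - X)\<^sup>*\<^sup>* s t"
    using conn unfolding conn_in_def by blast
  then have "P t"
    by (induction rule: rtranclp_induct) (use \<open>P s\<close> step in blast)+
  then show False using T \<open>t \<in> T\<close> conn unfolding conn_in_def by blast
qed

lemma OCC_edge_closed:
  assumes "graph V E" "OCC V E B C R" "E u v" "v \<notin> C"
  shows OCC_edge_closed_B: "u \<in> B \<Longrightarrow> v \<in> B"
    and OCC_edge_closed_R: "u \<in> R \<Longrightarrow> v \<in> R"
proof -
  have "v \<in> V" "E v u" using assms(1,3) unfolding graph_def by blast+
  moreover have "V = B \<union> C \<union> R" "\<forall>x\<in>B. \<forall>y\<in>R. \<not> E x y"
    using assms(2) unfolding OCC_def by blast+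
  ultimately show "u \<in> B \<Longrightarrow> v \<in> B" and "u \<in> R \<Longrightarrow> v \<in> R"
    using assms(3,4) by blast+
qed

lemma OCC_subset: "OCC V E B C R \<Longrightarrow> B \<union> C \<subseteq> V"
  unfolding OCC_def by (elim conjE) blast

lemma oct_le_card:
  assumes "finite S" "X \<subseteq> S" "bipartite_on E (S - X)"
  shows "oct E S \<le> card X"
proof -
  have "{card X | X. X \<subseteq> S \<and> bipartite_on E (S - X)} \<subseteq> card ` Pow S" by blast
  then have "finite {card X | X. X \<subseteq> S \<and> bipartite_on E (S - X)}"
    using \<open>finite S\<close> finite_subset by blast
  then show ?thesis unfolding oct_def using assms by (intro Min_le) auto
qed

lemma family_sep_pair:
  "family_sep E W [S, T] X \<longleftrightarrow>
     X \<subseteq> W \<and> separates E W X S T \<and> separates E W X T S"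
  unfolding family_sep_def by (auto simp: less_Suc_eq)

lemma family_sep_triple:
  "family_sep E W [S, T, U] X \<longleftrightarrow>
     X \<subseteq> W \<and> separates E W X S T \<and> separates E W X T S \<and> separates E W X S U
       \<and> separates E W X U S \<and> separates E W X T U \<and> separates E W X U T"
  unfolding family_sep_def by (auto simp: less_Suc_eq)

locale two_odd_cycle_cuts =
  fixes V :: "'a set" and E :: "'a \<Rightarrow> 'a \<Rightarrow> bool"
    and XB XC XR AB AC AR :: "'a set" and fX fA :: "'a \<Rightarrow> bool"
  assumes graph: "graph V E"
    and X_OCC: "OCC V E XB XC XR"
    and A_OCC: "OCC V E AB AC AR"
    and X_col: "proper_2col E XB fX"
    and A_col: "proper_2col E AB fA"
begin

definition agreeing :: "'a set" where
  "agreeing = {b \<in> XB. \<exists>c \<in> XC \<inter> AB. E b c \<and> fX b = fA c}"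

definition disagreeing :: "'a set" where
  "disagreeing = {b \<in> XB. \<exists>c \<in> XC \<inter> AB. E b c \<and> fX b \<noteq> fA c}"

definition touching_AR :: "'a set" where
  "touching_AR = nbhd E (XC \<inter> AR) \<inter> XB"

lemma sym: "E u v \<Longrightarrow> E v u"
  using graph unfolding graph_def by blast

lemma edge_flips_colours:
  assumes "E u v" "u \<in> XB \<inter> AB" "v \<in> XB \<inter> AB"
  shows "fX u \<noteq> fX v" "fA u \<noteq> fA v"
  using assms X_col A_col unfolding proper_2col_def by blast+

lemma agreeing_outside_AC:
  assumes "b \<in> agreeing" "b \<notin> AC"
  shows "b \<in> AB \<and> fX b \<noteq> fA b"
proof -
  obtain c where c: "c \<in> AB" "E c b" "fX b = fA c"
    using assms(1) sym unfolding agreeing_def by blast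
  then have "b \<in> AB" using OCC_edge_closed_B[OF graph A_OCC] assms(2) by blast
  with c show ?thesis using A_col unfolding proper_2col_def by blast
qed

lemma disagreeing_outside_AC:
  assumes "b \<in> disagreeing" "b \<notin> AC"
  shows "b \<in> AB \<and> fX b = fA b"
proof -
  obtain c where c: "c \<in> AB" "E c b" "fX b \<noteq> fA c"
    using assms(1) sym unfolding disagreeing_def by blast
  then have "b \<in> AB" using OCC_edge_closed_B[OF graph A_OCC] assms(2) by blast
  with c show ?thesis using A_col unfolding proper_2col_def by blast
qed

lemma touching_AR_outside_AC:
  "b \<in> touching_AR \<Longrightarrow> b \<notin> AC \<Longrightarrow> b \<in> AR"
  using OCC_edge_closed_R[OF graph A_OCC] unfolding touching_AR_def nbhd_def by blast

lemma AB_disjoint_touching_AR: "b \<in> AB \<Longrightarrow> b \<notin> touching_AR"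
  using A_OCC sym unfolding touching_AR_def nbhd_def OCC_def by blast

lemma AR_disjoint_attached: "b \<in> AR \<Longrightarrow> b \<notin> agreeing \<and> b \<notin> disagreeing"
  using A_OCC sym unfolding agreeing_def disagreeing_def OCC_def by blast

lemma separates_by_AB_invariant:
  assumes "\<And>b. b \<in> S \<Longrightarrow> b \<notin> AC \<Longrightarrow> b \<in> AB \<and> Q b"
    and "\<And>b. b \<in> T \<Longrightarrow> b \<notin> AC \<Longrightarrow> b \<in> AB \<Longrightarrow> \<not> Q b"
    and "\<And>u v. E u v \<Longrightarrow> u \<in> XB \<inter> AB \<Longrightarrow> v \<in> XB \<inter> AB \<Longrightarrow> Q u \<Longrightarrow> Q v"
  shows "separates E XB (AC \<inter> XB) S T"
  using OCC_edge_closed_B[OF graph A_OCC] assms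
  by (intro separates_by_invariant[where P = "\<lambda>v. v \<in> AB \<and> Q v"]) blast+

lemma AC_separates_attached_sets:
  "family_sep E XB [agreeing, disagreeing, touching_AR] (AC \<inter> XB)"
proof -
  have "separates E XB (AC \<inter> XB) agreeing disagreeing"
    using agreeing_outside_AC disagreeing_outside_AC edge_flips_colours
    by (intro separates_by_AB_invariant[where Q = "\<lambda>v. fX v \<noteq> fA v"]) blast+
  moreover have "separates E XB (AC \<inter> XB) disagreeing agreeing"
    using agreeing_outside_AC disagreeing_outside_AC edge_flips_colours
    by (intro separates_by_AB_invariant[where Q = "\<lambda>v. fX v = fA v"]) blast+
  moreover have "separates E XB (AC \<inter> XB) S touching_AR"
    if "S = agreeing \<or> S = disagreeing" for S
    using that agreeing_outside_AC disagreeing_outside_AC AB_disjoint_touching_AR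
    by (intro separates_by_AB_invariant[where Q = "\<lambda>_. True"]) blast+
  moreover have "separates E XB (AC \<inter> XB) touching_AR S"
    if "S = agreeing \<or> S = disagreeing" for S
    using that touching_AR_outside_AC AR_disjoint_attached
      OCC_edge_closed_R[OF graph A_OCC]
    by (intro separates_by_invariant[where P = "\<lambda>v. v \<in> AR"]) blast+
  ultimately show ?thesis unfolding family_sep_triple by blast
qed

lemma bipartite_without_separator:
  assumes sep: "separates E XB Y agreeing disagreeing"
  shows "bipartite_on E ((AB \<union> AC) - (AC - XB) - Y)"
proof -
  let ?S = "(AB \<union> AC) - (AC - XB) - Y"
  define reaches_R where "reaches_R v \<longleftrightarrow> (\<exists>r \<in> disagreeing. conn_in E (XB - Y) v r)" for v
  define g where "g v = (if v \<in> XB then fX v = reaches_R v else fA v)" for v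
  have cross: "g u \<noteq> g v"
    if e: "E u v" and u: "u \<in> XB - Y" and v: "v \<in> AB - XB" for u v
  proof -
    have "v \<in> XC" using X_OCC e u v graph unfolding OCC_def graph_def by blast
    show ?thesis
    proof (cases "fX u = fA v")
      case True
      then have "u \<in> agreeing" unfolding agreeing_def using e u v \<open>v \<in> XC\<close> by blast
      then have "\<not> reaches_R u" using sep unfolding reaches_R_def separates_def by blast
      then show ?thesis unfolding g_def using u v True by simp
    next
      case False
      then have "u \<in> disagreeing" unfolding disagreeing_def using e u v \<open>v \<in> XC\<close> by blast
      moreover have "conn_in E (XB - Y) u u" using u unfolding conn_in_def by blast
      ultimately have "reaches_R u" unfolding reaches_R_def by blast
      then show ?thesis unfolding g_def using u v False by simp
    qed
  qed
  have inside: "g u \<noteq> g v" if e: "E u v" and u: "u \<in> XB - Y" and v: "v \<in> XB - Y" for u v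
  proof -
    have "conn_in E (XB - Y) u v" "conn_in E (XB - Y) v u"
      using conn_in_edge[of E] sym e u v by blast+
    then have "reaches_R u = reaches_R v"
      unfolding reaches_R_def by (meson conn_in_trans)
    moreover have "fX u \<noteq> fX v" using X_col e u v unfolding proper_2col_def by blast
    ultimately show ?thesis unfolding g_def using u v by auto
  qed
  have "proper_2col E ?S g"
    unfolding proper_2col_def
  proof (intro ballI impI)
    fix u v assume "u \<in> ?S" "v \<in> ?S" "E u v"
    then consider "u \<in> XB - Y" "v \<in> XB - Y" | "u \<in> XB - Y" "v \<in> AB - XB"
      | "u \<in> AB - XB" "v \<in> XB - Y" | "u \<in> AB - XB" "v \<in> AB - XB" by blast
    then show "g u \<noteq> g v"
    proof cases
      case 4
      then show ?thesis using A_col \<open>E u v\<close> unfolding g_def proper_2col_def by auto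
    qed (use inside cross sym \<open>E u v\<close> in metis)+
  qed
  then show ?thesis unfolding bipartite_on_def by blast
qed

lemma card_AC_le_separator:
  assumes tight: "card AC = oct E (AB \<union> AC)"
    and sep: "separates E XB Y agreeing disagreeing" and "Y \<subseteq> XB"
  shows "card (AC \<inter> XB) \<le> card Y"
proof -
  have "finite V" using graph unfolding graph_def by (elim conjE)
  moreover have "AB \<union> AC \<subseteq> V" "Y \<subseteq> V"
    using OCC_subset[OF A_OCC] OCC_subset[OF X_OCC] \<open>Y \<subseteq> XB\<close> by blast+
  ultimately have fin: "finite (AB \<union> AC)" "finite Y"
    by (auto intro: rev_finite_subset)
  define T where "T = (AC - XB) \<union> (Y \<inter> (AB \<union> AC))"
  have "T \<subseteq> AB \<union> AC" "(AB \<union> AC) - T = (AB \<union> AC) - (AC - XB) - Y"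
    unfolding T_def by blast+
  then have "oct E (AB \<union> AC) \<le> card T"
    using oct_le_card[OF fin(1)] bipartite_without_separator[OF sep] by simp
  also have "\<dots> \<le> card (AC - XB) + card (Y \<inter> (AB \<union> AC))"
    unfolding T_def by (rule card_Un_le)
  also have "\<dots> \<le> card (AC - XB) + card Y"
    using card_mono[OF fin(2), of "Y \<inter> (AB \<union> AC)"] by simp
  finally have "card AC \<le> card (AC - XB) + card Y" using tight by simp
  moreover have "card AC = card (AC \<inter> XB) + card (AC - XB)"
    using fin card_Int_Diff[of AC XB] by (simp add: finite_Un)
  ultimately show ?thesis by simp
qed

end

theorem lemma3p5:
  fixes V :: "'a set" and E :: "'a \<Rightarrow> 'a \<Rightarrow> bool"
    and XB XC XR AB AC AR :: "'a set" and fX fA :: "'a \<Rightarrow> bool"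
  assumes "graph V E"
    and "OCC V E XB XC XR"
    and "tight_OCC V E AB AC AR"
    and "proper_2col E XB fX"
    and "proper_2col E AB fA"
  defines "A \<equiv> {b \<in> XB. \<exists>c \<in> XC \<inter> AB. E b c \<and> fX b = fA c}"
    and "R \<equiv> {b \<in> XB. \<exists>c \<in> XC \<inter> AB. E b c \<and> fX b \<noteq> fA c}"
    and "N \<equiv> nbhd E (XC \<inter> AR) \<inter> XB"
  shows "min_family_sep E XB [A, R] (AC \<inter> XB) \<and> min_family_sep E XB [A, R, N] (AC \<inter> XB)"
proof -
  have A_OCC: "OCC V E AB AC AR" and tight: "card AC = oct E (AB \<union> AC)"
    using assms(3)[unfolded tight_OCC_def] by (rule conjunct1, rule conjunct2)
  interpret two_odd_cycle_cuts V E XB XC XR AB AC AR fX fA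
    using assms(1,2,4,5) A_OCC by unfold_locales
  have sets: "agreeing = A" "disagreeing = R" "touching_AR = N"
    unfolding agreeing_def disagreeing_def touching_AR_def A_def R_def N_def by (rule refl)+
  have sep3: "family_sep E XB [A, R, N] (AC \<inter> XB)"
    using AC_separates_attached_sets unfolding sets .
  then have sep2: "family_sep E XB [A, R] (AC \<inter> XB)"
    unfolding family_sep_pair family_sep_triple by simp
  have "card (AC \<inter> XB) \<le> card Y" if "family_sep E XB [A, R] Y" for Y
    using card_AC_le_separator[OF tight] that unfolding sets family_sep_pair by blast
  moreover have "family_sep E XB [A, R] Y" if "family_sep E XB [A, R, N] Y" for Y
    using that unfolding family_sep_pair family_sep_triple by simp
  ultimately show ?thesis
    unfolding min_family_sep_def using sep2 sep3 by blast
qed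

end
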